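(* In the setting below, if the multigraph $\alpha$ is connected, $1\in V(\alpha)$, and $1\le|\alpha|\le\log_2(1/\rho)-1$, then \[ \tfrac12\lambda^{|\alpha|}\rho^{|V(\alpha)|}\le\kappa_\alpha\le\lambda^{|\alpha|}\rho^{|V(\alpha)|}. \]
   Context: Let $n\ge1$, $\lambda\ge0$, $\rho\in(0,1)$, $v\in\{0,1\}^n$ with i.i.d. $\mathrm{Bernoulli}(\rho)$ entries, $N=n(n+1)/2$ indexed by pairs $(i,j)$ with $1\le i\le j\le n$, $X_{ij}=\lambda v_iv_j$, and $x=v_1$. An index $\alpha=(\alpha_{ij})_{i\le j}\in\mathbb{N}^N$ is viewed as a multigraph on vertex set $[n]$ (self-loops allowed) with $\alpha_{ij}$ edges between $i$ and $j$; $|\alpha|$ is its number of edges and $V(\alpha)$ the set of vertices spanned by its edges. $\kappa_\alpha$ is defined recursively by $\kappa_\alpha=\mathbb{E}[xX^\alpha]-\sum_{0\le\beta\lneq\alpha}\kappa_\beta\binom{\alpha}{\beta}\mathbb{E}[X^{\alpha-\beta}]$, with multi-index notation $X^\alpha=\prod X_{ij}^{\alpha_{ij}}$, $\binom{\alpha}{\beta}=\prod\binom{\alpha_{ij}}{\beta_{ij}}$, $\beta\le\alpha$ entrywise, $\beta\lneq\alpha$ meaning $\beta\le\alpha$, $\beta\ne\alpha$. *)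

theory Defs
  imports Complex_Main "HOL-Library.Multiset" "HOL-Library.FuncSet"
begin

text \<open>A multi-index alpha in N^N (N = n(n+1)/2 pairs (i,j), i <= j) is represented as a
  multiset of pairs: count alpha (i,j) = alpha_ij.  Multi-indices are required to be
  supported on the index set below.\<close>

definition idx_pairs :: "nat \<Rightarrow> (nat \<times> nat) set" where
  "idx_pairs n = {(i, j). 1 \<le> i \<and> i \<le> j \<and> j \<le> n}"

definition verts :: "(nat \<times> nat) multiset \<Rightarrow> nat set" where
  "verts \<alpha> = fst ` set_mset \<alpha> \<union> snd ` set_mset \<alpha>"

definition adj :: "(nat \<times> nat) multiset \<Rightarrow> (nat \<times> nat) set" where
  "adj \<alpha> = {(i, j). (i, j) \<in># \<alpha> \<or> (j, i) \<in># \<alpha>}"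

definition mg_connected :: "(nat \<times> nat) multiset \<Rightarrow> bool" where
  "mg_connected \<alpha> \<longleftrightarrow> (\<forall>u\<in>verts \<alpha>. \<forall>w\<in>verts \<alpha>. (u, w) \<in> (adj \<alpha>)\<^sup>*)"

definition Xpow :: "real \<Rightarrow> (nat \<Rightarrow> real) \<Rightarrow> (nat \<times> nat) multiset \<Rightarrow> real" where
  "Xpow lam v \<alpha> = (\<Prod>p\<in>set_mset \<alpha>. (lam * v (fst p) * v (snd p)) ^ count \<alpha> p)"

definition mbinom :: "(nat \<times> nat) multiset \<Rightarrow> (nat \<times> nat) multiset \<Rightarrow> nat" where
  "mbinom \<alpha> \<beta> = (\<Prod>p\<in>set_mset \<alpha>. count \<alpha> p choose count \<beta> p)"

definition Ev :: "nat \<Rightarrow> real \<Rightarrow> ((nat \<Rightarrow> real) \<Rightarrow> real) \<Rightarrow> real" where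
  "Ev n \<rho> f = (\<Sum>v\<in>PiE {1..n} (\<lambda>_. {0, 1}).
      (\<Prod>i\<in>{1..n}. if v i = 1 then \<rho> else 1 - \<rho>) * f v)"

function kappa :: "nat \<Rightarrow> real \<Rightarrow> real \<Rightarrow> (nat \<times> nat) multiset \<Rightarrow> real" where
  "kappa n lam \<rho> \<alpha> =
     Ev n \<rho> (\<lambda>v. v 1 * Xpow lam v \<alpha>)
     - (\<Sum>\<beta>\<in>{\<beta>. \<beta> \<subset># \<alpha>}.
          kappa n lam \<rho> \<beta> * real (mbinom \<alpha> \<beta>) * Ev n \<rho> (\<lambda>v. Xpow lam v (\<alpha> - \<beta>)))"
  by pat_completeness auto
termination
  by (relation "measure (\<lambda>(n, lam, \<rho>, \<alpha>). size \<alpha>)") (auto simp: mset_subset_size)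

end

theory Submission
  imports Defs
begin

text \<open>
  As v is 0/1-valued, X^\<alpha> is \<lambda>^|\<alpha>| times the indicator that v = 1 on V(\<alpha>); hence
  E[X^\<alpha>] = \<lambda>^|\<alpha>| \<rho>^|V(\<alpha>)| and E[x X^\<alpha>] = \<lambda>^|\<alpha>| \<rho>^|V(\<alpha>) \<union> {1}|. These moments are
  multiplicative over parts of \<alpha> with disjoint vertex sets, which forces \<kappa>_\<alpha> = 0 unless \<alpha> is
  connected and contains vertex 1. For such \<alpha>, with w = \<lambda>^|\<alpha>| \<rho>^|V(\<alpha>)|, the term \<beta> = 0 of the
  recurrence equals \<rho> w, and every other proper \<beta> shares a vertex with \<alpha> - \<beta>, so by induction its
  term lies between 0 and binom(\<alpha>,\<beta>) \<rho> w. These binomials sum to 2^|\<alpha>| - 2, whence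
  (1 - \<rho> - (2^|\<alpha>| - 2) \<rho>) w \<le> \<kappa>_\<alpha> \<le> (1 - \<rho>) w, and \<rho> 2^(|\<alpha>|+1) \<le> 1 gives the lower bound w/2.
\<close>

section \<open>Moments of the Bernoulli model\<close>

declare kappa.simps [simp del]

lemma binary_cube_value:
  "v \<in> PiE {1..n} (\<lambda>_. {0::real, 1}) \<Longrightarrow> i \<in> {1..n} \<Longrightarrow> v i = 0 \<or> v i = 1"
  by (auto simp: PiE_def Pi_def)

lemma Ev_cong:
  "(\<And>v. v \<in> PiE {1..n} (\<lambda>_. {0::real, 1}) \<Longrightarrow> f v = g v) \<Longrightarrow> Ev n \<rho> f = Ev n \<rho> g"
  unfolding Ev_def by (rule sum.cong) auto

lemma Ev_cmult: "Ev n \<rho> (\<lambda>v. c * f v) = c * Ev n \<rho> f"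
  unfolding Ev_def by (simp add: sum_distrib_left algebra_simps)

lemma Ev_all_ones:
  assumes "S \<subseteq> {1..n}"
  shows "Ev n \<rho> (\<lambda>v. of_bool (\<forall>i\<in>S. v i = 1)) = \<rho> ^ card S"
proof -
  define h where "h i b = (if b = (1::real) then \<rho> else 1 - \<rho>) * (if i \<in> S then b else 1)"
    for i b
  have indicator_prod: "of_bool (\<forall>i\<in>S. v i = 1) = (\<Prod>i\<in>{1..n}. if i \<in> S then v i else 1)"
    if v: "v \<in> PiE {1..n} (\<lambda>_. {0::real, 1})" for v
  proof (cases "\<forall>i\<in>S. v i = 1")
    case False
    then obtain i where "i \<in> S" "v i = 0"
      using binary_cube_value[OF v] assms by blast
    then have "(\<Prod>i\<in>{1..n}. if i \<in> S then v i else 1) = 0"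
      using assms by (subst prod_zero_iff) auto
    then show ?thesis using False by (simp del: prod_zero_iff)
  qed (auto intro!: prod.neutral)
  have "Ev n \<rho> (\<lambda>v. of_bool (\<forall>i\<in>S. v i = 1))
      = (\<Sum>v\<in>PiE {1..n} (\<lambda>_. {0::real, 1}). \<Prod>i\<in>{1..n}. h i (v i))"
    unfolding Ev_def h_def by (rule sum.cong[OF refl]) (simp add: indicator_prod prod.distrib)
  also have "\<dots> = (\<Prod>i\<in>{1..n}. \<Sum>b\<in>{0::real, 1}. h i b)"
    by (rule prod_sum_PiE[symmetric]) auto
  also have "\<dots> = (\<Prod>i\<in>{1..n}. if i \<in> S then \<rho> else 1)"
    by (rule prod.cong) (auto simp: h_def)
  also have "\<dots> = \<rho> ^ card S"
    using assms by (simp add: prod.If_cases Int_absorb1)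
  finally show ?thesis .
qed

lemma finite_verts [simp]: "finite (verts \<beta>)"
  unfolding verts_def by auto

lemma verts_add: "verts (\<beta> + \<gamma>) = verts \<beta> \<union> verts \<gamma>"
  unfolding verts_def by auto

lemma verts_mono: "\<beta> \<subseteq># \<alpha> \<Longrightarrow> verts \<beta> \<subseteq> verts \<alpha>"
  unfolding verts_def using set_mset_mono by blast

lemma verts_empty_iff [simp]: "verts \<beta> = {} \<longleftrightarrow> \<beta> = {#}"
  unfolding verts_def by auto

lemma verts_subset_idx_pairs: "set_mset \<beta> \<subseteq> idx_pairs n \<Longrightarrow> verts \<beta> \<subseteq> {1..n}"
  by (auto simp: verts_def idx_pairs_def)

lemma Xpow_binary:
  assumes "set_mset \<beta> \<subseteq> idx_pairs n" and v: "v \<in> PiE {1..n} (\<lambda>_. {0::real, 1})"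
  shows "Xpow lam v \<beta> = lam ^ size \<beta> * of_bool (\<forall>i\<in>verts \<beta>. v i = 1)"
proof -
  have "Xpow lam v \<beta> = (\<Prod>p\<in>set_mset \<beta>. lam ^ count \<beta> p)
      * (\<Prod>p\<in>set_mset \<beta>. (v (fst p) * v (snd p)) ^ count \<beta> p)"
    unfolding Xpow_def by (simp add: prod.distrib[symmetric] power_mult_distrib mult.assoc)
  also have "(\<Prod>p\<in>set_mset \<beta>. lam ^ count \<beta> p) = lam ^ size \<beta>"
    by (simp add: size_multiset_overloaded_eq power_sum)
  also have "(\<Prod>p\<in>set_mset \<beta>. (v (fst p) * v (snd p)) ^ count \<beta> p)
      = of_bool (\<forall>i\<in>verts \<beta>. v i = 1)"
  proof (cases "\<forall>i\<in>verts \<beta>. v i = 1")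
    case True
    then show ?thesis by (auto simp: verts_def intro!: prod.neutral)
  next
    case False
    then obtain i where i: "i \<in> verts \<beta>" "v i \<noteq> 1" by auto
    then have "v i = 0"
      using binary_cube_value[OF v] verts_subset_idx_pairs[OF assms(1)] by blast
    moreover obtain p where p: "p \<in># \<beta>" "i = fst p \<or> i = snd p"
      using i(1) by (auto simp: verts_def)
    ultimately have "(v (fst p) * v (snd p)) ^ count \<beta> p = 0" by auto
    then have "(\<Prod>p\<in>set_mset \<beta>. (v (fst p) * v (snd p)) ^ count \<beta> p) = 0"
      using p(1) by (subst prod_zero_iff) auto
    then show ?thesis using False by (simp del: prod_zero_iff)
  qed
  finally show ?thesis .
qed

definition weight :: "real \<Rightarrow> real \<Rightarrow> (nat \<times> nat) multiset \<Rightarrow> real" where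
  "weight lam \<rho> \<beta> = lam ^ size \<beta> * \<rho> ^ card (verts \<beta>)"

lemma weight_empty [simp]: "weight lam \<rho> {#} = 1"
  by (simp add: weight_def verts_def)

lemma weight_nonneg: "0 \<le> lam \<Longrightarrow> 0 \<le> \<rho> \<Longrightarrow> 0 \<le> weight lam \<rho> \<beta>"
  by (simp add: weight_def)

lemma weight_add:
  "verts \<beta> \<inter> verts \<gamma> = {} \<Longrightarrow> weight lam \<rho> (\<beta> + \<gamma>) = weight lam \<rho> \<beta> * weight lam \<rho> \<gamma>"
  by (simp add: weight_def verts_add card_Un_disjoint power_add)

lemma Ev_Xpow:
  assumes "set_mset \<beta> \<subseteq> idx_pairs n"
  shows "Ev n \<rho> (\<lambda>v. Xpow lam v \<beta>) = weight lam \<rho> \<beta>"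
proof -
  have "Ev n \<rho> (\<lambda>v. Xpow lam v \<beta>) = Ev n \<rho> (\<lambda>v. lam ^ size \<beta> * of_bool (\<forall>i\<in>verts \<beta>. v i = 1))"
    by (rule Ev_cong) (simp add: Xpow_binary[OF assms])
  then show ?thesis
    by (simp add: Ev_cmult Ev_all_ones[OF verts_subset_idx_pairs[OF assms]] weight_def)
qed

lemma Ev_v1_Xpow:
  assumes "1 \<le> n" "set_mset \<beta> \<subseteq> idx_pairs n"
  shows "Ev n \<rho> (\<lambda>v. v 1 * Xpow lam v \<beta>) = lam ^ size \<beta> * \<rho> ^ card (insert 1 (verts \<beta>))"
proof -
  have "Ev n \<rho> (\<lambda>v. v 1 * Xpow lam v \<beta>)
      = Ev n \<rho> (\<lambda>v. lam ^ size \<beta> * of_bool (\<forall>i\<in>insert 1 (verts \<beta>). v i = 1))"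
  proof (rule Ev_cong)
    fix v assume v: "v \<in> PiE {1..n} (\<lambda>_. {0::real, 1})"
    then have "v 1 = 0 \<or> v 1 = 1" using binary_cube_value assms(1) by auto
    then show "v 1 * Xpow lam v \<beta> = lam ^ size \<beta> * of_bool (\<forall>i\<in>insert 1 (verts \<beta>). v i = 1)"
      by (auto simp: Xpow_binary[OF assms(2) v])
  qed
  also have "\<dots> = lam ^ size \<beta> * \<rho> ^ card (insert 1 (verts \<beta>))"
    using assms verts_subset_idx_pairs[OF assms(2)] unfolding Ev_cmult by (subst Ev_all_ones) auto
  finally show ?thesis .
qed

lemma kappa_recurrence:
  assumes "1 \<le> n" "set_mset \<alpha> \<subseteq> idx_pairs n"
  shows "kappa n lam \<rho> \<alpha> = lam ^ size \<alpha> * \<rho> ^ card (insert 1 (verts \<alpha>))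
    - (\<Sum>\<beta>\<in>{\<beta>. \<beta> \<subset># \<alpha>}. kappa n lam \<rho> \<beta> * real (mbinom \<alpha> \<beta>) * weight lam \<rho> (\<alpha> - \<beta>))"
proof -
  have "set_mset (\<alpha> - \<beta>) \<subseteq> idx_pairs n" for \<beta>
    using assms(2) by (meson in_diffD subset_iff)
  then show ?thesis
    by (subst kappa.simps, subst Ev_v1_Xpow[OF assms]) (simp add: Ev_Xpow)
qed

lemma kappa_empty: "1 \<le> n \<Longrightarrow> kappa n lam \<rho> {#} = \<rho>"
  by (subst kappa_recurrence) (auto simp: verts_def)

section \<open>Submultisets and multi-binomial coefficients\<close>

lemma bij_betw_submsets_PiE:
  "bij_betw (\<lambda>\<beta>. restrict (count \<beta>) (set_mset \<alpha>)) {\<beta>. \<beta> \<subseteq># \<alpha>}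
     (PiE (set_mset \<alpha>) (\<lambda>p. {0..count \<alpha> p}))"
proof (rule bij_betwI')
  fix \<beta> \<gamma> assume "\<beta> \<in> {\<beta>. \<beta> \<subseteq># \<alpha>}" "\<gamma> \<in> {\<beta>. \<beta> \<subseteq># \<alpha>}"
  then have "count \<beta> p = count \<gamma> p" if "p \<notin># \<alpha>" for p
    using that by (metis mem_Collect_eq le_zero_eq mset_subset_eq_count not_in_iff)
  then show "(restrict (count \<beta>) (set_mset \<alpha>) = restrict (count \<gamma>) (set_mset \<alpha>)) = (\<beta> = \<gamma>)"
    by (metis multiset_eqI restrict_apply')
next
  fix \<beta> assume "\<beta> \<in> {\<beta>. \<beta> \<subseteq># \<alpha>}"
  then show "restrict (count \<beta>) (set_mset \<alpha>) \<in> PiE (set_mset \<alpha>) (\<lambda>p. {0..count \<alpha> p})"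
    by (auto simp: mset_subset_eq_count)
next
  fix g assume g: "g \<in> PiE (set_mset \<alpha>) (\<lambda>p. {0..count \<alpha> p})"
  define f where "f p = (if p \<in># \<alpha> then g p else 0)" for p
  have "finite {p. f p > 0}"
    by (rule finite_subset[of _ "set_mset \<alpha>"]) (auto simp: f_def)
  then have count_eq: "count (Abs_multiset f) = f"
    by (rule count_Abs_multiset)
  have "Abs_multiset f \<subseteq># \<alpha>"
    using g unfolding subseteq_mset_def count_eq f_def by (auto simp: PiE_def Pi_def)
  moreover have "g = restrict (count (Abs_multiset f)) (set_mset \<alpha>)"
    using g unfolding count_eq f_def by (auto simp: fun_eq_iff PiE_def extensional_def)
  ultimately show "\<exists>\<beta>\<in>{\<beta>. \<beta> \<subseteq># \<alpha>}. g = restrict (count \<beta>) (set_mset \<alpha>)" by blast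
qed

lemma finite_submsets: "finite {\<beta>. \<beta> \<subseteq># \<alpha>}"
  using bij_betw_finite[OF bij_betw_submsets_PiE] by (simp add: finite_PiE)

lemma finite_proper_submsets: "finite {\<beta>. \<beta> \<subset># \<alpha>}"
  by (rule finite_subset[OF _ finite_submsets[of \<alpha>]]) auto

lemma mbinom_self [simp]: "mbinom \<alpha> \<alpha> = 1"
  by (simp add: mbinom_def)

lemma mbinom_empty [simp]: "mbinom \<alpha> {#} = 1"
  by (simp add: mbinom_def)

lemma sum_mbinom: "(\<Sum>\<beta>\<in>{\<beta>. \<beta> \<subseteq># \<alpha>}. real (mbinom \<alpha> \<beta>)) = 2 ^ size \<alpha>"
proof -
  define c where "c g = (\<Prod>p\<in>set_mset \<alpha>. real (count \<alpha> p choose g p))" for g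
  have "(\<Sum>\<beta>\<in>{\<beta>. \<beta> \<subseteq># \<alpha>}. real (mbinom \<alpha> \<beta>))
      = (\<Sum>\<beta>\<in>{\<beta>. \<beta> \<subseteq># \<alpha>}. c (restrict (count \<beta>) (set_mset \<alpha>)))"
    unfolding mbinom_def c_def by (rule sum.cong) auto
  also have "\<dots> = (\<Sum>g\<in>PiE (set_mset \<alpha>) (\<lambda>p. {0..count \<alpha> p}). c g)"
    by (rule sum.reindex_bij_betw[OF bij_betw_submsets_PiE])
  also have "\<dots> = (\<Prod>p\<in>set_mset \<alpha>. \<Sum>j\<in>{0..count \<alpha> p}. real (count \<alpha> p choose j))"
    unfolding c_def by (rule prod_sum_PiE[symmetric]) auto
  also have "\<dots> = (\<Prod>p\<in>set_mset \<alpha>. 2 ^ count \<alpha> p)"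
    by (simp add: atLeast0AtMost choose_row_sum flip: of_nat_sum)
  also have "\<dots> = 2 ^ size \<alpha>"
    by (simp add: size_multiset_overloaded_eq power_sum)
  finally show ?thesis .
qed

lemma sum_mbinom_proper_nonempty:
  assumes "\<alpha> \<noteq> {#}"
  shows "(\<Sum>\<beta>\<in>{\<beta>. \<beta> \<subset># \<alpha>} - {{#}}. real (mbinom \<alpha> \<beta>)) = 2 ^ size \<alpha> - 2"
proof -
  have "{\<beta>. \<beta> \<subseteq># \<alpha>} = insert \<alpha> {\<beta>. \<beta> \<subset># \<alpha>}"
    by auto
  then have "2 ^ size \<alpha> = 1 + (\<Sum>\<beta>\<in>{\<beta>. \<beta> \<subset># \<alpha>}. real (mbinom \<alpha> \<beta>))"
    using sum_mbinom[of \<alpha>] finite_proper_submsets[of \<alpha>] by simp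
  moreover have "{#} \<subset># \<alpha>"
    using assms by (simp add: subset_mset.zero_less_iff_neq_zero)
  ultimately show ?thesis
    using finite_proper_submsets[of \<alpha>] by (simp add: sum_diff1)
qed

lemma mbinom_add_disjoint:
  assumes "set_mset \<beta> \<inter> set_mset \<delta> = {}" "\<gamma> \<subseteq># \<beta>"
  shows "mbinom (\<beta> + \<delta>) \<gamma> = mbinom \<beta> \<gamma>"
proof -
  have "count \<gamma> p = 0" if "p \<in># \<delta>" for p
    using that assms by (metis disjoint_iff mset_subset_eqD not_in_iff)
  moreover have "count \<delta> p = 0" if "p \<in># \<beta>" for p
    using that assms(1) by (auto simp: not_in_iff)
  ultimately show ?thesis
    unfolding mbinom_def using assms(1)
    by (simp add: prod.union_disjoint prod.neutral cong: prod.cong)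
qed

lemma submset_add_disjoint_decomp:
  assumes "set_mset \<beta> \<inter> set_mset \<delta> = {}" "\<gamma> \<subseteq># \<beta> + \<delta>"
  obtains \<gamma>1 \<gamma>2 where "\<gamma> = \<gamma>1 + \<gamma>2" "\<gamma>1 \<subseteq># \<beta>" "\<gamma>2 \<subseteq># \<delta>"
proof
  show "\<gamma> = filter_mset (\<lambda>p. p \<in># \<beta>) \<gamma> + filter_mset (\<lambda>p. p \<notin># \<beta>) \<gamma>"
    by (simp add: multiset_partition)
  have bound: "count \<gamma> p \<le> count \<beta> p + count \<delta> p" for p
    using assms(2) by (metis count_union mset_subset_eq_count)
  show "filter_mset (\<lambda>p. p \<in># \<beta>) \<gamma> \<subseteq># \<beta>"
  proof (rule mset_subset_eqI)
    fix p show "count (filter_mset (\<lambda>p. p \<in># \<beta>) \<gamma>) p \<le> count \<beta> p"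
      using bound[of p] assms(1) by (auto simp: not_in_iff disjoint_iff)
  qed
  show "filter_mset (\<lambda>p. p \<notin># \<beta>) \<gamma> \<subseteq># \<delta>"
  proof (rule mset_subset_eqI)
    fix p show "count (filter_mset (\<lambda>p. p \<notin># \<beta>) \<gamma>) p \<le> count \<delta> p"
      using bound[of p] by (auto simp: not_in_iff)
  qed
qed

section \<open>Vanishing of \<kappa> off rooted connected multigraphs\<close>

lemma moment_expansion:
  assumes "1 \<le> n" "set_mset \<beta> \<subseteq> idx_pairs n"
  shows "lam ^ size \<beta> * \<rho> ^ card (insert 1 (verts \<beta>))
    = (\<Sum>\<gamma>\<in>{\<gamma>. \<gamma> \<subseteq># \<beta>}. kappa n lam \<rho> \<gamma> * real (mbinom \<beta> \<gamma>) * weight lam \<rho> (\<beta> - \<gamma>))"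
proof -
  have "{\<gamma>. \<gamma> \<subseteq># \<beta>} = insert \<beta> {\<gamma>. \<gamma> \<subset># \<beta>}"
    by auto
  then show ?thesis
    using finite_proper_submsets[of \<beta>] by (simp add: kappa_recurrence[OF assms, of lam \<rho>])
qed

lemma weight_diff_add:
  assumes "\<gamma> \<subseteq># \<beta>" "verts \<beta> \<inter> verts \<delta> = {}"
  shows "weight lam \<rho> (\<beta> + \<delta> - \<gamma>) = weight lam \<rho> (\<beta> - \<gamma>) * weight lam \<rho> \<delta>"
proof -
  have "\<beta> + \<delta> - \<gamma> = (\<beta> - \<gamma>) + \<delta>"
    using assms(1) by (metis subset_mset.add_diff_assoc2)
  moreover have "verts (\<beta> - \<gamma>) \<inter> verts \<delta> = {}"
    using verts_mono[of "\<beta> - \<gamma>" \<beta>] assms(2) by auto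
  ultimately show ?thesis
    by (simp add: weight_add)
qed

lemma rooted_moment_add_detached:
  assumes "verts \<delta> \<inter> insert 1 (verts \<beta>) = {}"
  shows "weight lam \<rho> \<delta> * (lam ^ size \<beta> * \<rho> ^ card (insert 1 (verts \<beta>)))
    = lam ^ size (\<beta> + \<delta>) * \<rho> ^ card (insert 1 (verts (\<beta> + \<delta>)))"
proof -
  have "card (insert 1 (verts (\<beta> + \<delta>))) = card (insert 1 (verts \<beta>) \<union> verts \<delta>)"
    by (simp add: verts_add)
  also have "\<dots> = card (insert 1 (verts \<beta>)) + card (verts \<delta>)"
    using assms by (intro card_Un_disjoint) auto
  finally show ?thesis
    by (simp add: weight_def power_add)
qed

lemma kappa_eq_0_if_detached:
  assumes "1 \<le> n" "set_mset (\<beta> + \<delta>) \<subseteq> idx_pairs n" "\<delta> \<noteq> {#}"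
    "verts \<delta> \<inter> insert 1 (verts \<beta>) = {}"
  shows "kappa n lam \<rho> (\<beta> + \<delta>) = 0"
  using assms(2-)
proof (induction "size (\<beta> + \<delta>)" arbitrary: \<beta> \<delta> rule: less_induct)
  case less
  let ?T = "\<lambda>\<alpha> \<gamma>. kappa n lam \<rho> \<gamma> * real (mbinom \<alpha> \<gamma>) * weight lam \<rho> (\<alpha> - \<gamma>)"
  have disj: "set_mset \<beta> \<inter> set_mset \<delta> = {}"
    using less.prems(3) by (force simp: verts_def)
  have idx: "set_mset \<beta> \<subseteq> idx_pairs n"
    using less.prems(1) by auto
  have vanish: "?T (\<beta> + \<delta>) \<gamma> = 0"
    if proper: "\<gamma> \<subset># \<beta> + \<delta>" and not_sub: "\<not> \<gamma> \<subseteq># \<beta>" for \<gamma>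
  proof -
    obtain \<gamma>1 \<gamma>2 where \<gamma>: "\<gamma> = \<gamma>1 + \<gamma>2" "\<gamma>1 \<subseteq># \<beta>" "\<gamma>2 \<subseteq># \<delta>"
      using submset_add_disjoint_decomp[OF disj subset_mset.less_imp_le[OF proper]] .
    have "kappa n lam \<rho> (\<gamma>1 + \<gamma>2) = 0"
    proof (rule less.hyps)
      show "size (\<gamma>1 + \<gamma>2) < size (\<beta> + \<delta>)"
        using mset_subset_size[OF proper] \<gamma>(1) by simp
      show "set_mset (\<gamma>1 + \<gamma>2) \<subseteq> idx_pairs n"
        using less.prems(1) proper \<gamma>(1) by (meson set_mset_mono subset_mset.less_imp_le order_trans)
      show "\<gamma>2 \<noteq> {#}"
        using not_sub \<gamma> by auto
      show "verts \<gamma>2 \<inter> insert 1 (verts \<gamma>1) = {}"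
        using verts_mono[OF \<gamma>(2)] verts_mono[OF \<gamma>(3)] less.prems(3) by auto
    qed
    then show ?thesis using \<gamma>(1) by simp
  qed
  have reduce: "?T (\<beta> + \<delta>) \<gamma> = weight lam \<rho> \<delta> * ?T \<beta> \<gamma>" if "\<gamma> \<subseteq># \<beta>" for \<gamma>
  proof -
    have "verts \<beta> \<inter> verts \<delta> = {}"
      using less.prems(3) by auto
    then show ?thesis
      using mbinom_add_disjoint[OF disj that] by (simp add: weight_diff_add[OF that])
  qed
  \<comment> \<open>only the \<gamma> inside \<beta> contribute, and they rebuild the moment of \<beta> times the weight of \<delta>\<close>
  have "{\<gamma>. \<gamma> \<subseteq># \<beta>} \<subseteq> {\<gamma>. \<gamma> \<subset># \<beta> + \<delta>}"
    using less.prems(2) by (auto simp: subset_mset.le_less_trans subset_mset.less_add_same_cancel1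
        subset_mset.zero_less_iff_neq_zero)
  then have "(\<Sum>\<gamma>\<in>{\<gamma>. \<gamma> \<subset># \<beta> + \<delta>}. ?T (\<beta> + \<delta>) \<gamma>) = (\<Sum>\<gamma>\<in>{\<gamma>. \<gamma> \<subseteq># \<beta>}. ?T (\<beta> + \<delta>) \<gamma>)"
    using vanish by (intro sum.mono_neutral_right finite_proper_submsets) auto
  also have "\<dots> = weight lam \<rho> \<delta> * (\<Sum>\<gamma>\<in>{\<gamma>. \<gamma> \<subseteq># \<beta>}. ?T \<beta> \<gamma>)"
    by (simp add: reduce sum_distrib_left)
  also have "\<dots> = weight lam \<rho> \<delta> * (lam ^ size \<beta> * \<rho> ^ card (insert 1 (verts \<beta>)))"
    by (simp only: moment_expansion[OF assms(1) idx])
  also have "\<dots> = lam ^ size (\<beta> + \<delta>) * \<rho> ^ card (insert 1 (verts (\<beta> + \<delta>)))"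
    by (rule rooted_moment_add_detached[OF less.prems(3)])
  finally show ?case
    by (simp add: kappa_recurrence[OF assms(1) less.prems(1)])
qed

lemma adj_converse: "(adj \<beta>)\<inverse> = adj \<beta>"
  unfolding adj_def by auto

lemma rooted_connected_if_reachable_from_1:
  assumes "\<beta> \<noteq> {#}" "verts \<beta> \<subseteq> {w. (1, w) \<in> (adj \<beta>)\<^sup>*}"
  shows "mg_connected \<beta> \<and> 1 \<in> verts \<beta>"
proof
  obtain p where p: "p \<in># \<beta>" using assms(1) by blast
  then have "(1, fst p) \<in> (adj \<beta>)\<^sup>*"
    using assms(2) by (auto simp: verts_def)
  then show "1 \<in> verts \<beta>"
  proof (cases rule: converse_rtranclE)
    case base
    then show ?thesis using p by (auto simp: verts_def)
  next
    case (step y)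
    then show ?thesis by (force simp: adj_def verts_def)
  qed
  show "mg_connected \<beta>"
    unfolding mg_connected_def
  proof (intro ballI)
    fix u w assume "u \<in> verts \<beta>" "w \<in> verts \<beta>"
    then have "(u, 1) \<in> (adj \<beta>)\<^sup>*" "(1, w) \<in> (adj \<beta>)\<^sup>*"
      using assms(2) rtrancl_converseI[of 1 u "adj \<beta>"] by (auto simp: adj_converse)
    then show "(u, w) \<in> (adj \<beta>)\<^sup>*" by (rule rtrancl_trans)
  qed
qed

lemma detached_part_exists:
  assumes "\<beta> \<noteq> {#}" "\<not> (mg_connected \<beta> \<and> 1 \<in> verts \<beta>)"
  obtains \<beta>1 \<beta>2 where "\<beta> = \<beta>1 + \<beta>2" "\<beta>2 \<noteq> {#}" "verts \<beta>2 \<inter> insert 1 (verts \<beta>1) = {}"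
proof
  \<comment> \<open>split off the edges outside the connected component of vertex 1\<close>
  define S where "S = {w. (1, w) \<in> (adj \<beta>)\<^sup>*}"
  have closed: "fst p \<in> S \<longleftrightarrow> snd p \<in> S" if "p \<in># \<beta>" for p
  proof -
    have "(fst p, snd p) \<in> adj \<beta>" "(snd p, fst p) \<in> adj \<beta>"
      using that by (auto simp: adj_def)
    then show ?thesis unfolding S_def by (auto intro: rtrancl_into_rtrancl)
  qed
  show "\<beta> = filter_mset (\<lambda>p. fst p \<in> S) \<beta> + filter_mset (\<lambda>p. fst p \<notin> S) \<beta>"
    by (simp add: multiset_partition)
  show "verts (filter_mset (\<lambda>p. fst p \<notin> S) \<beta>) \<inter> insert 1 (verts (filter_mset (\<lambda>p. fst p \<in> S) \<beta>)) = {}"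
    using closed by (force simp: verts_def S_def)
  show "filter_mset (\<lambda>p. fst p \<notin> S) \<beta> \<noteq> {#}"
  proof
    assume "filter_mset (\<lambda>p. fst p \<notin> S) \<beta> = {#}"
    then have "verts \<beta> \<subseteq> S"
      using closed by (force simp: verts_def)
    then show False
      using rooted_connected_if_reachable_from_1[OF assms(1)] assms(2) by (simp add: S_def)
  qed
qed

lemma kappa_eq_0_unless_rooted_connected:
  assumes "1 \<le> n" "set_mset \<beta> \<subseteq> idx_pairs n" "\<beta> \<noteq> {#}" "\<not> (mg_connected \<beta> \<and> 1 \<in> verts \<beta>)"
  shows "kappa n lam \<rho> \<beta> = 0"
proof -
  obtain \<beta>1 \<beta>2 where "\<beta> = \<beta>1 + \<beta>2" "\<beta>2 \<noteq> {#}" "verts \<beta>2 \<inter> insert 1 (verts \<beta>1) = {}"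
    using detached_part_exists[OF assms(3,4)] by blast
  then show ?thesis
    using kappa_eq_0_if_detached[OF assms(1)] assms(2) by blast
qed

section \<open>Bounds on \<kappa> for rooted connected multigraphs\<close>

lemma connected_parts_share_vertex:
  assumes "mg_connected \<alpha>" "\<beta> \<subseteq># \<alpha>" "\<beta> \<noteq> {#}" "\<alpha> - \<beta> \<noteq> {#}"
  shows "verts \<beta> \<inter> verts (\<alpha> - \<beta>) \<noteq> {}"
proof
  assume disjoint: "verts \<beta> \<inter> verts (\<alpha> - \<beta>) = {}"
  obtain u w where u: "u \<in> verts \<beta>" and w: "w \<in> verts (\<alpha> - \<beta>)"
    using assms(3,4) by (meson ex_in_conv verts_empty_iff)
  have "(u, w) \<in> (adj \<alpha>)\<^sup>*"
    using assms(1) u w verts_mono[OF assms(2)] verts_mono[of "\<alpha> - \<beta>" \<alpha>]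
    unfolding mg_connected_def by auto
  then have "w \<in> verts \<beta>"
  proof (induction rule: rtrancl_induct)
    case base
    show ?case using u .
  next
    case (step y z)
    from step(2) have "(y, z) \<in># \<alpha> \<or> (z, y) \<in># \<alpha>"
      by (simp add: adj_def)
    moreover have "\<alpha> = \<beta> + (\<alpha> - \<beta>)"
      using assms(2) by simp
    ultimately have "(y, z) \<in># \<beta> \<or> (z, y) \<in># \<beta> \<or> (y, z) \<in># \<alpha> - \<beta> \<or> (z, y) \<in># \<alpha> - \<beta>"
      by (metis union_iff)
    moreover have "y \<notin> verts (\<alpha> - \<beta>)" using step(3) disjoint by auto
    ultimately show ?case by (force simp: verts_def)
  qed
  then show False using w disjoint by auto
qed

lemma weight_connected_split:
  assumes "0 \<le> lam" "0 < \<rho>" "\<rho> \<le> 1" "mg_connected \<alpha>" "\<beta> \<subset># \<alpha>" "\<beta> \<noteq> {#}"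
  shows "weight lam \<rho> \<beta> * weight lam \<rho> (\<alpha> - \<beta>) \<le> \<rho> * weight lam \<rho> \<alpha>"
proof -
  have \<alpha>: "\<alpha> = \<beta> + (\<alpha> - \<beta>)"
    using assms(5) by simp
  have "\<alpha> - \<beta> \<noteq> {#}"
    using assms(5) by (simp add: Diff_eq_empty_iff_mset subset_mset.less_le_not_le)
  then have "verts \<beta> \<inter> verts (\<alpha> - \<beta>) \<noteq> {}"
    using connected_parts_share_vertex assms(4-6) by auto
  then have "card (verts \<alpha>) + 1 \<le> card (verts \<beta>) + card (verts (\<alpha> - \<beta>))"
    using card_Un_Int[of "verts \<beta>" "verts (\<alpha> - \<beta>)"] verts_add[of \<beta> "\<alpha> - \<beta>"] \<alpha>
    by (simp add: Suc_le_eq card_gt_0_iff)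
  then have "\<rho> ^ (card (verts \<beta>) + card (verts (\<alpha> - \<beta>))) \<le> \<rho> ^ (card (verts \<alpha>) + 1)"
    using assms(2,3) by (intro power_decreasing) auto
  then have "lam ^ size \<alpha> * \<rho> ^ (card (verts \<beta>) + card (verts (\<alpha> - \<beta>)))
      \<le> lam ^ size \<alpha> * \<rho> ^ (card (verts \<alpha>) + 1)"
    using assms(1) by (simp add: mult_left_mono)
  moreover have "weight lam \<rho> \<beta> * weight lam \<rho> (\<alpha> - \<beta>)
      = lam ^ size \<alpha> * \<rho> ^ (card (verts \<beta>) + card (verts (\<alpha> - \<beta>)))"
    using size_union[of \<beta> "\<alpha> - \<beta>"] \<alpha> by (simp add: weight_def power_add)
  moreover have "\<rho> * weight lam \<rho> \<alpha> = lam ^ size \<alpha> * \<rho> ^ (card (verts \<alpha>) + 1)"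
    by (simp add: weight_def mult.left_commute)
  ultimately show ?thesis
    by linarith
qed

lemma recurrence_term_bounds:
  assumes "0 \<le> lam" "0 < \<rho>" "\<rho> \<le> 1" "mg_connected \<alpha>" "\<beta> \<subset># \<alpha>" "\<beta> \<noteq> {#}"
    and "0 \<le> k" "k \<le> weight lam \<rho> \<beta>"
  shows "0 \<le> k * real (mbinom \<alpha> \<beta>) * weight lam \<rho> (\<alpha> - \<beta>)
    \<and> k * real (mbinom \<alpha> \<beta>) * weight lam \<rho> (\<alpha> - \<beta>) \<le> real (mbinom \<alpha> \<beta>) * (\<rho> * weight lam \<rho> \<alpha>)"
proof -
  have w_nonneg: "0 \<le> weight lam \<rho> (\<alpha> - \<beta>)"
    using assms(1,2) by (simp add: weight_nonneg)
  have "k * weight lam \<rho> (\<alpha> - \<beta>) \<le> weight lam \<rho> \<beta> * weight lam \<rho> (\<alpha> - \<beta>)"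
    using assms(8) w_nonneg by (rule mult_right_mono)
  also have "\<dots> \<le> \<rho> * weight lam \<rho> \<alpha>"
    using assms(1-6) by (rule weight_connected_split)
  finally have "real (mbinom \<alpha> \<beta>) * (k * weight lam \<rho> (\<alpha> - \<beta>))
      \<le> real (mbinom \<alpha> \<beta>) * (\<rho> * weight lam \<rho> \<alpha>)"
    by (simp add: mult_left_mono)
  then show ?thesis
    using assms(7) w_nonneg by (simp add: algebra_simps)
qed

lemma kappa_recurrence_rooted:
  assumes "1 \<le> n" "set_mset \<alpha> \<subseteq> idx_pairs n" "\<alpha> \<noteq> {#}" "1 \<in> verts \<alpha>"
  shows "kappa n lam \<rho> \<alpha> = (1 - \<rho>) * weight lam \<rho> \<alpha>
    - (\<Sum>\<beta>\<in>{\<beta>. \<beta> \<subset># \<alpha>} - {{#}}. kappa n lam \<rho> \<beta> * real (mbinom \<alpha> \<beta>) * weight lam \<rho> (\<alpha> - \<beta>))"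
proof -
  define R where "R = {\<beta>. \<beta> \<subset># \<alpha>} - {{#}}"
  define T where "T \<beta> = kappa n lam \<rho> \<beta> * real (mbinom \<alpha> \<beta>) * weight lam \<rho> (\<alpha> - \<beta>)" for \<beta>
  have "finite R"
    using finite_proper_submsets[of \<alpha>] by (simp add: R_def)
  moreover have "{\<beta>. \<beta> \<subset># \<alpha>} = insert {#} R"
    using assms(3) by (auto simp: R_def subset_mset.zero_less_iff_neq_zero)
  moreover have "{#} \<notin> R"
    by (simp add: R_def)
  ultimately have "(\<Sum>\<beta>\<in>{\<beta>. \<beta> \<subset># \<alpha>}. T \<beta>) = T {#} + (\<Sum>\<beta>\<in>R. T \<beta>)"
    by simp
  moreover have "T {#} = \<rho> * weight lam \<rho> \<alpha>"
    by (simp add: T_def kappa_empty[OF assms(1)])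
  moreover have "kappa n lam \<rho> \<alpha> = weight lam \<rho> \<alpha> - (\<Sum>\<beta>\<in>{\<beta>. \<beta> \<subset># \<alpha>}. T \<beta>)"
    by (simp only: kappa_recurrence[OF assms(1,2)] insert_absorb[OF assms(4)])
      (simp add: weight_def T_def)
  ultimately have "kappa n lam \<rho> \<alpha> = weight lam \<rho> \<alpha> - \<rho> * weight lam \<rho> \<alpha> - (\<Sum>\<beta>\<in>R. T \<beta>)"
    by simp
  then show ?thesis
    by (simp add: R_def T_def left_diff_distrib)
qed

lemma kappa_bounds_step:
  assumes "1 \<le> n" "0 \<le> lam" "0 < \<rho>" "\<rho> < 1" "\<rho> * 2 ^ (size \<alpha> + 1) \<le> 1"
    and \<alpha>: "set_mset \<alpha> \<subseteq> idx_pairs n" "\<alpha> \<noteq> {#}" "mg_connected \<alpha>" "1 \<in> verts \<alpha>"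
    and smaller: "\<And>\<beta>. \<beta> \<subset># \<alpha> \<Longrightarrow> \<beta> \<noteq> {#} \<Longrightarrow>
      0 \<le> kappa n lam \<rho> \<beta> \<and> kappa n lam \<rho> \<beta> \<le> weight lam \<rho> \<beta>"
  shows "weight lam \<rho> \<alpha> / 2 \<le> kappa n lam \<rho> \<alpha> \<and> kappa n lam \<rho> \<alpha> \<le> weight lam \<rho> \<alpha>"
proof -
  define w where "w = weight lam \<rho> \<alpha>"
  define R where "R = {\<beta>. \<beta> \<subset># \<alpha>} - {{#}}"
  define S where "S = (\<Sum>\<beta>\<in>R. kappa n lam \<rho> \<beta> * real (mbinom \<alpha> \<beta>) * weight lam \<rho> (\<alpha> - \<beta>))"
  have w_nonneg: "0 \<le> w"
    using assms(2,3) by (simp add: w_def weight_nonneg)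
  have term_bounds: "0 \<le> kappa n lam \<rho> \<beta> * real (mbinom \<alpha> \<beta>) * weight lam \<rho> (\<alpha> - \<beta>)
      \<and> kappa n lam \<rho> \<beta> * real (mbinom \<alpha> \<beta>) * weight lam \<rho> (\<alpha> - \<beta>) \<le> real (mbinom \<alpha> \<beta>) * (\<rho> * w)"
    if "\<beta> \<in> R" for \<beta>
    using that smaller[of \<beta>] recurrence_term_bounds[OF assms(2,3) _ \<alpha>(3), of \<beta>] assms(4)
    by (auto simp: R_def w_def)
  have "0 \<le> S"
    unfolding S_def using term_bounds by (simp add: sum_nonneg)
  have "S \<le> (\<Sum>\<beta>\<in>R. real (mbinom \<alpha> \<beta>) * (\<rho> * w))"
    unfolding S_def using term_bounds by (simp add: sum_mono)
  also have "\<dots> = (2 ^ size \<alpha> - 2) * (\<rho> * w)"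
    using sum_mbinom_proper_nonempty[OF \<alpha>(2)] by (simp add: R_def flip: sum_distrib_right)
  finally have "S \<le> \<rho> * 2 ^ size \<alpha> * w - 2 * (\<rho> * w)"
    by (simp add: algebra_simps)
  moreover have "\<rho> * 2 ^ size \<alpha> * w \<le> w / 2"
    using assms(5) w_nonneg mult_right_mono[of "\<rho> * 2 ^ size \<alpha>" "1 / 2" w] by simp
  moreover have "0 \<le> \<rho> * w"
    using assms(3) w_nonneg by simp
  moreover have "kappa n lam \<rho> \<alpha> = w - \<rho> * w - S"
    using kappa_recurrence_rooted[OF assms(1) \<alpha>(1,2,4)] by (simp add: w_def S_def R_def algebra_simps)
  ultimately show ?thesis
    using \<open>0 \<le> S\<close> unfolding w_def[symmetric] by linarith
qed

lemma kappa_bounds: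
  assumes "1 \<le> n" "0 \<le> lam" "0 < \<rho>" "\<rho> < 1"
  shows "set_mset \<alpha> \<subseteq> idx_pairs n \<Longrightarrow> \<alpha> \<noteq> {#} \<Longrightarrow> mg_connected \<alpha> \<Longrightarrow> 1 \<in> verts \<alpha>
    \<Longrightarrow> \<rho> * 2 ^ (size \<alpha> + 1) \<le> 1
    \<Longrightarrow> weight lam \<rho> \<alpha> / 2 \<le> kappa n lam \<rho> \<alpha> \<and> kappa n lam \<rho> \<alpha> \<le> weight lam \<rho> \<alpha>"
proof (induction "size \<alpha>" arbitrary: \<alpha> rule: less_induct)
  case less
  show ?case
  proof (rule kappa_bounds_step[OF assms less.prems(5,1-4)])
    fix \<beta> assume \<beta>: "\<beta> \<subset># \<alpha>" "\<beta> \<noteq> {#}"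
    have idx: "set_mset \<beta> \<subseteq> idx_pairs n"
      using less.prems(1) \<beta>(1) by (meson mset_subset_eqD subset_iff subset_mset.less_imp_le)
    have w_nonneg: "0 \<le> weight lam \<rho> \<beta>"
      using assms(2,3) by (simp add: weight_nonneg)
    show "0 \<le> kappa n lam \<rho> \<beta> \<and> kappa n lam \<rho> \<beta> \<le> weight lam \<rho> \<beta>"
    proof (cases "mg_connected \<beta> \<and> 1 \<in> verts \<beta>")
      case True
      have size: "size \<beta> < size \<alpha>"
        using mset_subset_size[OF \<beta>(1)] .
      then have "\<rho> * 2 ^ (size \<beta> + 1) \<le> \<rho> * 2 ^ (size \<alpha> + 1)"
        using assms(3) by (intro mult_left_mono power_increasing) auto
      then show ?thesis
        using less.hyps[OF size idx \<beta>(2)] True less.prems(5) w_nonneg by auto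
    next
      case False
      then show ?thesis
        using kappa_eq_0_unless_rooted_connected[OF assms(1) idx \<beta>(2)] w_nonneg by simp
    qed
  qed
qed

theorem mainTheorem19:
  fixes n :: nat and lam \<rho> :: real and \<alpha> :: "(nat \<times> nat) multiset"
  assumes "n \<ge> 1" and "lam \<ge> 0" and "0 < \<rho>" and "\<rho> < 1"
    and "set_mset \<alpha> \<subseteq> idx_pairs n"
    and "mg_connected \<alpha>" and "1 \<in> verts \<alpha>"
    and "1 \<le> size \<alpha>" and "real (size \<alpha>) \<le> log 2 (1 / \<rho>) - 1"
  shows "1 / 2 * lam ^ size \<alpha> * \<rho> ^ card (verts \<alpha>) \<le> kappa n lam \<rho> \<alpha>
    \<and> kappa n lam \<rho> \<alpha> \<le> lam ^ size \<alpha> * \<rho> ^ card (verts \<alpha>)"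
proof -
  have "real (size \<alpha> + 1) \<le> log 2 (1 / \<rho>)"
    using assms(9) by simp
  then have "2 powr real (size \<alpha> + 1) \<le> 1 / \<rho>"
    using assms(3) le_log_iff[of 2 "1 / \<rho>"] by simp
  moreover have "2 powr real (size \<alpha> + 1) = (2::real) ^ (size \<alpha> + 1)"
    by (rule powr_realpow) simp
  ultimately have "\<rho> * 2 ^ (size \<alpha> + 1) \<le> 1"
    using assms(3) by (simp add: field_simps)
  moreover have "\<alpha> \<noteq> {#}"
    using assms(8) by auto
  ultimately show ?thesis
    using kappa_bounds[OF assms(1-4,5)] assms(6,7) by (simp add: weight_def)
qed

end
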